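(* Let $f(x)=\frac{x-1}{\log x}$ for $x>0$, $x\neq1$, extended by continuity to $[0,\infty)$ ($f(0)=0$, $f(1)=1$). Then for all $x\ge 0$, $$f(x)=\int_0^1 (1\,!_t\,x)\,g(t)\,dt,\qquad g(t)=\int_0^1\frac{\sin\lambda\pi}{\pi\,t^{1-\lambda}(1-t)^{\lambda}}\,d\lambda=\frac{1}{t(1-t)\left(\pi^2+\log^2\!\left(\frac{t}{1-t}\right)\right)}.$$ Moreover, for all $x\ge0$ (with the value at $x=0$ equal to $0$ and at $x=1$ equal to $1$, by continuity), $$\frac{x}{x-1}\log x=\int_0^1 1\,!_t\,x\,dt,$$ i.e. the function $x\mapsto 1/f(1/x)=\frac{x\log x}{x-1}$ has Lebesgue measure on $[0,1]$ as its associated measure.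
   Context: For $t\in[0,1]$ and $x\ge0$, $1\,!_t\,x=\dfrac{x}{(1-t)x+t}$ for $(t,x)\ne(0,0)$ and $1\,!_0\,0=1$. The associated measure of an operator monotone $f:[0,\infty)\to[0,\infty)$ is the unique finite Borel measure $\mu$ on $[0,1]$ with $f(x)=\int_{[0,1]}1\,!_t\,x\,d\mu(t)$ for all $x\ge0$. *)

theory Defs
  imports "HOL-Analysis.Analysis"
begin

text \<open>Weighted harmonic mean 1 !_t x, with the convention 1 !_0 0 = 1.\<close>
definition harm :: "real \<Rightarrow> real \<Rightarrow> real" where
  "harm t x = (if t = 0 \<and> x = 0 then 1 else x / ((1 - t) * x + t))"

definition logmean :: "real \<Rightarrow> real" where
  "logmean x = (if x = 0 then 0 else if x = 1 then 1 else (x - 1) / ln x)"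

definition logmean_dual :: "real \<Rightarrow> real" where
  "logmean_dual x = (if x = 0 then 0 else if x = 1 then 1 else x / (x - 1) * ln x)"

definition g_integrand :: "real \<Rightarrow> real \<Rightarrow> real" where
  "g_integrand t l = sin (l * pi) / (pi * t powr (1 - l) * (1 - t) powr l)"

definition g_dens :: "real \<Rightarrow> real" where
  "g_dens t = (LINT l:{0..1}|lborel. g_integrand t l)"

end

theory Submission
  imports Defs
begin

(* For x > 0, f(x) is the integral of x powr l over l in [0, 1]. Each power x powr l is in turn
   an average of the harmonic means 1 !_t x: the substitution s = t / ((1 - t) x + t) turns
   Beta(l, 1 - l) = pi / sin (l pi) into the integral of (1 !_t x) t^(l-1) (1-t)^(-l) / x^l over
   t in [0, 1]. Integrating over l and exchanging the integrals (Tonelli; all integrands are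
   nonnegative) gives the density g. The closed form of g and the integral of 1 !_t x itself
   are explicit antiderivative computations. *)

lemma harm_denom_pos:
  assumes "(x::real) > 0" "t \<in> {0..1}"
  shows "(1 - t) * x + t > 0"
  using assms by (cases "t = 0") (auto intro!: add_nonneg_pos mult_nonneg_nonneg)

lemma harm_eq_divide: "x > 0 \<Longrightarrow> harm t x = x / ((1 - t) * x + t)"
  by (simp add: harm_def)

lemma harm_nonneg: "x \<ge> 0 \<Longrightarrow> t \<in> {0..1} \<Longrightarrow> harm t x \<ge> 0"
  unfolding harm_def by (auto intro!: divide_nonneg_nonneg)

lemma continuous_on_harm: "x > 0 \<Longrightarrow> continuous_on {0..1} (\<lambda>t. harm t x)"
  unfolding harm_eq_divide by (intro continuous_intros) (use harm_denom_pos in fastforce)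

lemma Beta_one_minus:
  assumes "0 < l" "l < (1::real)"
  shows "Beta l (1 - l) = pi / sin (pi * l)"
proof -
  have "complex_of_real (Gamma l * Gamma (1 - l)) = complex_of_real (pi / sin (pi * l))"
    using Gamma_reflection_complex[of "complex_of_real l"]
    by (simp add: Gamma_complex_of_real[symmetric] sin_of_real[symmetric])
  then show ?thesis by (simp only: of_real_eq_iff) (simp add: Beta_def)
qed

lemma Beta_kernel_eq_odds_powr:
  assumes "0 < t" "t < (1::real)"
  shows "t powr (l - 1) * (1 - t) powr (- l) = (t / (1 - t)) powr l / t"
proof -
  have "(t / (1 - t)) powr l / t = t powr l / t powr 1 / (1 - t) powr l"
    using assms by (simp add: powr_divide)
  then show ?thesis by (simp add: powr_diff powr_minus divide_inverse)
qed

(* At t = 0 and t = 1 both sides vanish, since 0 powr a = 0. *)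
lemma g_integrand_eq_Beta_kernel:
  assumes "t \<in> {0..1}"
  shows "g_integrand t l = sin (l * pi) / pi * (t powr (l - 1) * (1 - t) powr (- l))"
  using assms by (cases "t = 0 \<or> t = 1") (auto simp: g_integrand_def powr_minus powr_diff field_simps)

lemma has_integral_powr_exponent:
  assumes "x > 0"
  shows "((\<lambda>l. x powr l) has_integral logmean x) {0..1}"
proof (cases "x = 1")
  case True
  then show ?thesis
    using has_integral_const_real[of "1::real" 0 1] by (simp add: logmean_def)
next
  case False
  define F where "F l = exp (l * ln x) / ln x" for l
  have "((\<lambda>l. x powr l) has_integral F 1 - F 0) {0..1}"
  proof (rule fundamental_theorem_of_calculus)
    fix l :: real
    have "(F has_real_derivative exp (l * ln x) * (1 * ln x) / ln x) (at l within {0..1})"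
      unfolding F_def by (auto intro!: derivative_eq_intros)
    then show "(F has_vector_derivative x powr l) (at l within {0..1})"
      using assms False by (simp add: has_real_derivative_iff_has_vector_derivative powr_def)
  qed simp
  moreover have "F 1 - F 0 = logmean x"
    using assms False by (simp add: F_def logmean_def diff_divide_distrib)
  ultimately show ?thesis by simp
qed

lemma logmean_nonneg: "x \<ge> 0 \<Longrightarrow> logmean x \<ge> 0"
  by (cases "x < 1") (auto simp: logmean_def zero_le_divide_iff)

lemma integral_exp_mult_sin_pi:
  "(LINT l:{0..1}|lborel. exp (b * l) * sin (pi * l)) = pi * (exp b + 1) / (pi\<^sup>2 + b\<^sup>2)"
proof -
  have pb: "pi\<^sup>2 + b\<^sup>2 > 0" by (simp add: add_pos_nonneg)
  define G where "G l = exp (b * l) * (b * sin (pi * l) - pi * cos (pi * l))" for l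
  define F where "F l = G l / (pi\<^sup>2 + b\<^sup>2)" for l
  have "(LINT l:{0..1}|lborel. exp (b * l) * sin (pi * l)) = F 1 - F 0"
    unfolding set_lebesgue_integral_def
  proof (rule integral_FTC_atLeastAtMost)
    fix l :: real
    have "(G has_real_derivative exp (b * l) * sin (pi * l) * (pi\<^sup>2 + b\<^sup>2)) (at l within {0..1})"
      unfolding G_def by (rule derivative_eq_intros refl)+ (simp add: algebra_simps power2_eq_square)
    then have "(F has_real_derivative exp (b * l) * sin (pi * l) * (pi\<^sup>2 + b\<^sup>2) / (pi\<^sup>2 + b\<^sup>2)) (at l within {0..1})"
      unfolding F_def by (rule DERIV_cdivide)
    then show "(F has_vector_derivative exp (b * l) * sin (pi * l)) (at l within {0..1})"
      using pb by (simp add: has_real_derivative_iff_has_vector_derivative)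
  qed (auto intro!: continuous_intros)
  also have "F 1 - F 0 = pi * (exp b + 1) / (pi\<^sup>2 + b\<^sup>2)"
    by (simp add: F_def G_def add_divide_distrib algebra_simps)
  finally show ?thesis .
qed

lemma g_integrand_at_ends: "g_integrand 0 l = 0" "g_integrand 1 l = 0"
  by (simp_all add: g_integrand_def)

lemma g_dens_at_ends: "g_dens 0 = 0" "g_dens 1 = 0"
  by (simp_all add: g_dens_def g_integrand_at_ends)

lemma g_integrand_nonneg: "l \<in> {0..1} \<Longrightarrow> g_integrand t l \<ge> 0"
  unfolding g_integrand_def by (intro divide_nonneg_nonneg sin_ge_zero mult_nonneg_nonneg) auto

lemma g_dens_nonneg: "g_dens t \<ge> 0"
  unfolding g_dens_def set_lebesgue_integral_def
  by (intro integral_nonneg_AE AE_I2) (auto simp: indicator_def g_integrand_nonneg)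

lemma g_dens_closed_form:
  assumes "0 < t" "t < 1"
  shows "set_integrable lborel {0..1} (g_integrand t)"
    and "g_dens t = 1 / (t * (1 - t) * (pi\<^sup>2 + (ln (t / (1 - t)))\<^sup>2))"
proof -
  define b where "b = ln (t / (1 - t))"
  have g: "g_integrand t l = exp (b * l) * sin (pi * l) / (pi * t)" for l
  proof -
    have "g_integrand t l = sin (l * pi) / pi * ((t / (1 - t)) powr l / t)"
      using assms by (simp add: g_integrand_eq_Beta_kernel Beta_kernel_eq_odds_powr)
    also have "(t / (1 - t)) powr l = exp (b * l)"
      using assms by (simp add: powr_def b_def mult.commute)
    finally show ?thesis by (simp add: mult.commute)
  qed
  show "set_integrable lborel {0..1} (g_integrand t)"
    unfolding g using assms by (intro borel_integrable_atLeastAtMost' continuous_intros) auto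
  have "g_dens t = (LINT l:{0..1}|lborel. exp (b * l) * sin (pi * l)) / (pi * t)"
    unfolding g_dens_def g by (rule set_integral_divide_zero)
  also have "\<dots> = (exp b + 1) / (t * (pi\<^sup>2 + b\<^sup>2))"
    using assms by (simp add: integral_exp_mult_sin_pi)
  also have "exp b = t / (1 - t)"
    using assms by (simp add: b_def)
  finally show "g_dens t = 1 / (t * (1 - t) * (pi\<^sup>2 + (ln (t / (1 - t)))\<^sup>2))"
    using assms by (simp add: b_def field_simps add_pos_nonneg)
qed

lemma has_bochner_integral_harm:
  assumes "x \<ge> 0"
  shows "has_bochner_integral lborel (\<lambda>t. indicator {0..1} t * harm t x) (logmean_dual x)"
proof (cases "x = 0")
  case True
  then have "(\<lambda>t. indicator {0..1} t * harm t x) = indicator {0}"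
    by (auto simp: harm_def indicator_def)
  then show ?thesis
    using True by (simp add: has_bochner_integral_iff logmean_dual_def)
next
  case False
  with assms have x: "x > 0" by simp
  define F where "F t = (if x = 1 then t else x / (1 - x) * ln ((1 - t) * x + t))" for t
  have "integral\<^sup>L lborel (\<lambda>t. indicator {0..1} t *\<^sub>R harm t x) = F 1 - F 0"
  proof (rule integral_FTC_atLeastAtMost)
    fix t :: real assume "0 \<le> t" "t \<le> 1"
    then have D: "(1 - t) * x + t > 0" using harm_denom_pos[OF x] by simp
    have "(F has_real_derivative harm t x) (at t within {0..1})"
    proof (cases "x = 1")
      case True
      then show ?thesis by (simp add: F_def[abs_def] harm_def)
    next
      case False
      have "((\<lambda>t. x / (1 - x) * ln ((1 - t) * x + t)) has_real_derivative
              x / (1 - x) * (((0 - 1) * x + 1) / ((1 - t) * x + t))) (at t within {0..1})"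
        using D by (auto intro!: derivative_eq_intros)
      moreover have "x / (1 - x) * (((0 - 1) * x + 1) / ((1 - t) * x + t)) = harm t x"
        using False by (simp add: harm_eq_divide[OF x])
      ultimately show ?thesis
        using False by (simp add: F_def[abs_def])
    qed
    then show "(F has_vector_derivative harm t x) (at t within {0..1})"
      by (simp add: has_real_derivative_iff_has_vector_derivative)
  qed (use continuous_on_harm[OF x] in auto)
  moreover have "F 1 - F 0 = logmean_dual x"
    using x by (simp add: F_def logmean_dual_def field_simps)
  ultimately show ?thesis
    using borel_integrable_atLeastAtMost'[OF continuous_on_harm[OF x]]
    by (simp add: has_bochner_integral_iff set_integrable_def)
qed

lemma Beta_kernel_harm_substitution:
  assumes x: "x > 0" and t: "0 < t" "t < 1"
  defines "D \<equiv> (1 - t) * x + t"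
  shows "(t / D) powr (l - 1) * (1 - t / D) powr (- l) * (x / D\<^sup>2)
           = harm t x * (t powr (l - 1) * (1 - t) powr (- l)) / x powr l"
proof -
  have D: "D > t" using x t by (simp add: D_def)
  have "t / D / (1 - t / D) = t / (D - t)"
    using D t by (simp add: field_simps)
  also have "D - t = (1 - t) * x"
    by (simp add: D_def)
  finally have odds: "t / D / (1 - t / D) = t / (1 - t) / x"
    by simp
  have "(t / D) powr (l - 1) * (1 - t / D) powr (- l) = (t / (1 - t) / x) powr l / (t / D)"
    unfolding odds[symmetric] using D t by (intro Beta_kernel_eq_odds_powr) simp_all
  also have "(t / (1 - t) / x) powr l = (t / (1 - t)) powr l / x powr l"
    by (rule powr_divide)
  finally have "(t / D) powr (l - 1) * (1 - t / D) powr (- l) * (x / D\<^sup>2)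
      = (x / D) * ((t / (1 - t)) powr l / t) / x powr l"
    using D t by (simp add: field_simps power2_eq_square)
  also have "x / D = harm t x"
    by (simp add: harm_eq_divide[OF x] D_def)
  finally show ?thesis
    using t by (simp add: Beta_kernel_eq_odds_powr)
qed

lemma nn_integral_harm_Beta_kernel:
  assumes x: "x > 0" and l: "0 < l" "l < 1"
  shows "(\<integral>\<^sup>+t. ennreal (indicator {0..1} t * (harm t x * (t powr (l - 1) * (1 - t) powr (- l)))) \<partial>lborel)
           = ennreal (x powr l * Beta l (1 - l))"
proof -
  define D where "D t = (1 - t) * x + t" for t
  define \<phi> where "\<phi> t = t / D t" for t
  define \<phi>' where "\<phi>' t = x / (D t)\<^sup>2" for t
  define f where "f s = s powr (l - 1) * (1 - s) powr (- l)" for s :: real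
  have D_pos: "t \<in> {0..1} \<Longrightarrow> D t > 0" for t
    using harm_denom_pos[OF x] by (simp add: D_def)
  have \<phi>_ends: "\<phi> 0 = 0" "\<phi> 1 = 1"
    by (simp_all add: \<phi>_def D_def)
  have subst: "(\<integral>\<^sup>+s. ennreal (f s * indicator {\<phi> 0..\<phi> 1} s) \<partial>lborel)
             = (\<integral>\<^sup>+t. ennreal (f (\<phi> t) * \<phi>' t * indicator {0..1} t) \<partial>lborel)"
  proof (rule nn_integral_substitution)
    show "set_borel_measurable borel {\<phi> 0..\<phi> 1} f"
      unfolding set_borel_measurable_def f_def by measurable
    fix t :: real assume t: "t \<in> {0..1}"
    have "(\<phi> has_real_derivative (1 * D t - t * ((0 - 1) * x + 1)) / (D t * D t)) (at t)"
      unfolding \<phi>_def D_def using D_pos[OF t] unfolding D_def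
      by (auto intro!: derivative_eq_intros)
    then show "(\<phi> has_real_derivative \<phi>' t) (at t)"
      by (simp add: \<phi>'_def D_def power2_eq_square algebra_simps)
    show "\<phi>' t \<ge> 0"
      by (simp add: \<phi>'_def x less_imp_le)
  next
    show "continuous_on {0..1} \<phi>'"
      unfolding \<phi>'_def D_def by (intro continuous_intros) (use harm_denom_pos[OF x] in fastforce)
  qed simp
  have Beta: "(\<integral>\<^sup>+s. ennreal (f s * indicator {0..1} s) \<partial>lborel) = ennreal (Beta l (1 - l))"
    using nn_integral_has_integral_lebesgue[OF _ has_integral_Beta_real[of l "1 - l"]] l
    by (simp add: f_def mult.commute)
  have kernel: "indicator {0..1} t * (harm t x * (t powr (l - 1) * (1 - t) powr (- l)))
                  = x powr l * (f (\<phi> t) * \<phi>' t * indicator {0..1} t)" for t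
  proof (cases "0 < t \<and> t < 1")
    case True
    then show ?thesis
      using Beta_kernel_harm_substitution[OF x, of t l] x
      by (simp add: f_def \<phi>_def \<phi>'_def D_def)
  next
    case False
    then consider "t \<notin> {0..1}" | "t = 0" | "t = 1" by fastforce
    then show ?thesis
      by cases (simp_all add: f_def \<phi>_def \<phi>'_def D_def)
  qed
  have "(\<integral>\<^sup>+t. ennreal (indicator {0..1} t * (harm t x * (t powr (l - 1) * (1 - t) powr (- l)))) \<partial>lborel)
          = ennreal (x powr l) * (\<integral>\<^sup>+t. ennreal (f (\<phi> t) * \<phi>' t * indicator {0..1} t) \<partial>lborel)"
    unfolding kernel ennreal_mult'[OF powr_ge_zero]
    by (rule nn_integral_cmult) (simp add: f_def \<phi>_def \<phi>'_def D_def)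
  also have "\<dots> = ennreal (x powr l) * ennreal (Beta l (1 - l))"
    unfolding subst[symmetric] \<phi>_ends Beta ..
  finally show ?thesis
    by (simp add: ennreal_mult')
qed

lemma nn_integral_harm_g_integrand:
  assumes x: "x > 0" and l: "0 < l" "l < 1"
  shows "(\<integral>\<^sup>+t. ennreal (indicator {0..1} t * (harm t x * g_integrand t l)) \<partial>lborel) = ennreal (x powr l)"
proof -
  define c where "c = sin (l * pi) / pi"
  have c: "c > 0"
    using l by (simp add: c_def sin_gt_zero)
  have pw: "indicator {0..1} t * (harm t x * g_integrand t l)
          = c * (indicator {0..1} t * (harm t x * (t powr (l - 1) * (1 - t) powr (- l))))" for t
    by (cases "t \<in> {0..1}") (simp_all add: g_integrand_eq_Beta_kernel c_def)
  have "(\<integral>\<^sup>+t. ennreal (indicator {0..1} t * (harm t x * g_integrand t l)) \<partial>lborel)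
      = ennreal c * (\<integral>\<^sup>+t. ennreal (indicator {0..1} t * (harm t x * (t powr (l - 1) * (1 - t) powr (- l)))) \<partial>lborel)"
    unfolding pw ennreal_mult'[OF less_imp_le[OF c]]
    by (rule nn_integral_cmult) (simp add: harm_def)
  also have "(\<integral>\<^sup>+t. ennreal (indicator {0..1} t * (harm t x * (t powr (l - 1) * (1 - t) powr (- l)))) \<partial>lborel)
      = ennreal (x powr l * Beta l (1 - l))"
    by (rule nn_integral_harm_Beta_kernel[OF x l])
  also have "ennreal c * ennreal (x powr l * Beta l (1 - l)) = ennreal (c * (x powr l * Beta l (1 - l)))"
    using c by (simp add: ennreal_mult')
  also have "c * (x powr l * Beta l (1 - l)) = x powr l"
    using l sin_gt_zero[of "pi * l"] by (simp add: c_def Beta_one_minus mult.commute)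
  finally show ?thesis .
qed

lemma nn_integral_g_integrand:
  assumes "t \<in> {0..1}"
  shows "(\<integral>\<^sup>+l. ennreal (indicator {0..1} l * g_integrand t l) \<partial>lborel) = ennreal (g_dens t)"
proof (cases "t = 0 \<or> t = 1")
  case True
  then show ?thesis
    by (auto simp: g_integrand_at_ends g_dens_at_ends)
next
  case False
  with assms have "0 < t" "t < 1" by auto
  then show ?thesis
    unfolding g_dens_def set_lebesgue_integral_def
    using g_dens_closed_form(1)[of t]
    by (subst nn_integral_eq_integral)
       (auto simp: set_integrable_def indicator_def g_integrand_nonneg intro!: AE_I2)
qed

lemma borel_measurable_g_dens: "g_dens \<in> borel_measurable lborel"
proof -
  have "(\<lambda>(t, l). indicator {0..1} l *\<^sub>R g_integrand t l) \<in> borel_measurable (lborel \<Otimes>\<^sub>M lborel)"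
    unfolding g_integrand_def by measurable
  then show ?thesis
    unfolding g_dens_def set_lebesgue_integral_def by (rule lborel.borel_measurable_lebesgue_integral)
qed

lemma nn_integral_harm_g_dens:
  assumes "x > 0"
  shows "(\<integral>\<^sup>+t. ennreal (indicator {0..1} t * (harm t x * g_dens t)) \<partial>lborel) = ennreal (logmean x)"
proof -
  define H where "H t l = indicator {0..1} t * indicator {0..1} l * (harm t x * g_integrand t l)" for t l :: real
  have H_measurable: "(\<lambda>(t, l). ennreal (H t l)) \<in> borel_measurable (lborel \<Otimes>\<^sub>M lborel)"
    unfolding H_def harm_def g_integrand_def by measurable
  have inner_l: "(\<integral>\<^sup>+l. ennreal (H t l) \<partial>lborel) = ennreal (indicator {0..1} t * (harm t x * g_dens t))" for t
  proof (cases "t \<in> {0..1}")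
    case True
    have H_eq: "H t l = harm t x * (indicator {0..1} l * g_integrand t l)" for l
      using True by (simp add: H_def)
    have "(\<integral>\<^sup>+l. ennreal (H t l) \<partial>lborel)
        = (\<integral>\<^sup>+l. ennreal (harm t x) * ennreal (indicator {0..1} l * g_integrand t l) \<partial>lborel)"
      unfolding H_eq ennreal_mult'[OF harm_nonneg[OF less_imp_le[OF assms] True]] ..
    also have "\<dots> = ennreal (harm t x) * (\<integral>\<^sup>+l. ennreal (indicator {0..1} l * g_integrand t l) \<partial>lborel)"
      by (rule nn_integral_cmult) (simp add: g_integrand_def)
    also have "(\<integral>\<^sup>+l. ennreal (indicator {0..1} l * g_integrand t l) \<partial>lborel) = ennreal (g_dens t)"
      by (rule nn_integral_g_integrand[OF True])
    finally show ?thesis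
      using True harm_nonneg[OF less_imp_le[OF assms] True] by (simp add: ennreal_mult')
  qed (simp add: H_def)
  have inner_t: "AE l in lborel. (\<integral>\<^sup>+t. ennreal (H t l) \<partial>lborel) = ennreal (indicator {0..1} l * x powr l)"
    using AE_lborel_singleton[of 0] AE_lborel_singleton[of 1]
  proof eventually_elim
    case (elim l)
    then show ?case
      using nn_integral_harm_g_integrand[OF assms, of l]
      by (cases "l \<in> {0..1}") (simp_all add: H_def mult.assoc mult.left_commute)
  qed
  have "(\<integral>\<^sup>+t. ennreal (indicator {0..1} t * (harm t x * g_dens t)) \<partial>lborel)
      = (\<integral>\<^sup>+l. (\<integral>\<^sup>+t. ennreal (H t l) \<partial>lborel) \<partial>lborel)"
    unfolding inner_l[symmetric] by (rule lborel_pair.Fubini'[OF H_measurable, symmetric])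
  also have "\<dots> = (\<integral>\<^sup>+l. ennreal (indicator {0..1} l * x powr l) \<partial>lborel)"
    by (rule nn_integral_cong_AE[OF inner_t])
  also have "\<dots> = ennreal (logmean x)"
    using nn_integral_has_integral_lebesgue[OF _ has_integral_powr_exponent[OF assms]]
    by (simp add: mult.commute)
  finally show ?thesis .
qed

lemma has_bochner_integral_harm_g_dens:
  assumes "x \<ge> 0"
  shows "has_bochner_integral lborel (\<lambda>t. indicator {0..1} t * (harm t x * g_dens t)) (logmean x)"
proof (cases "x = 0")
  case True
  then have "(\<lambda>t. indicator {0..1} t * (harm t x * g_dens t)) = (\<lambda>t. 0)"
    by (auto simp: harm_def g_dens_at_ends)
  then show ?thesis
    using True by (simp add: logmean_def has_bochner_integral_zero)
next
  case False
  have "(\<lambda>t. indicator {0..1} t * (harm t x * g_dens t)) \<in> borel_measurable lborel"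
    using borel_measurable_g_dens unfolding harm_def by measurable
  then show ?thesis
    using nn_integral_harm_g_dens logmean_nonneg harm_nonneg g_dens_nonneg assms False
    by (intro has_bochner_integral_nn_integral) (auto simp: indicator_def intro!: AE_I2)
qed

theorem mainTheorem5:
  shows "(\<forall>x\<ge>0. set_integrable lborel {0..1::real} (\<lambda>t. harm t x * g_dens t) \<and>
            logmean x = (LINT t:{0..1}|lborel. harm t x * g_dens t))
       \<and> (\<forall>t\<in>{0<..<1::real}. set_integrable lborel {0..1::real} (g_integrand t) \<and>
            g_dens t = 1 / (t * (1 - t) * (pi\<^sup>2 + (ln (t / (1 - t)))\<^sup>2)))
       \<and> (\<forall>x\<ge>0. set_integrable lborel {0..1::real} (\<lambda>t. harm t x) \<and>
            logmean_dual x = (LINT t:{0..1}|lborel. harm t x))"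
  using has_bochner_integral_harm_g_dens g_dens_closed_form has_bochner_integral_harm
  by (auto simp: has_bochner_integral_iff set_integrable_def set_lebesgue_integral_def)

end
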